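(* Let $n\ge5$, $\Delta\subset B_n$ a proper ideal, and $2\le k\le\lfloor\frac{n-1}2\rfloor$. The following are equivalent: (1) $g_k(\mathrm{Bier}(B_n,\Delta))=0$; (2) $f_k(\Delta)=0$ or $f_{n-k}(\Delta)=\binom nk$; (3) $\mathrm{Bier}(B_n,\Delta)$ is obtained (up to isomorphism) from the boundary complex of the $(n-1)$-simplex by a sequence of bistellar $i$-flips with $i\le k-2$ at every flip.
   Context: $B_n$ is the Boolean lattice of subsets of $[1,n]$. A proper ideal $\Delta\subset B_n$ is a nonempty family of subsets of $[1,n]$ closed under taking subsets with $[1,n]\notin\Delta$; $f_i(\Delta)$ is the number of sets of cardinality $i$ in $\Delta$. The Bier sphere $\mathrm{Bier}(B_n,\Delta)$ is the simplicial complex whose faces are the pairs $(B,C)$ with $B\subsetneq C\subseteq[1,n]$, $B\in\Delta$, $C\notin\Delta$, with $(B',C')$ a face of $(B,C)$ iff $B'\subseteq B$ and $C\subseteq C'$ (concretely $(B,C)$ is the vertex set $B\sqcup\{\bar d:d\notin C\}$ on $[1,n]\sqcup\{\bar1,\dots,\bar n\}$); it is a simplicial $(n-2)$-sphere. For a complex $\Gamma$ whose facets have $n-1$ vertices, $f_j(\Gamma)$ is the number of faces with $j$ vertices, $h_i(\Gamma):=\sum_{j=0}^{n-1}(-1)^{i+j}\binom{n-1-j}{n-1-i}f_j(\Gamma)$ ($0\le i\le n-1$; $h_i:=0$ otherwise), and $g_i(\Gamma):=h_i(\Gamma)-h_{i-1}(\Gamma)$. Bistellar flip: if $\Gamma$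 is a simplicial $d$-manifold, $A$ a $(d-i)$-dimensional face ($0\le i\le d$) whose link is the boundary $\partial B$ of an $i$-simplex $B$ that is not a face of $\Gamma$, then $\Phi_A(\Gamma):=(\Gamma\setminus(A*\partial B))\cup(\partial A*B)$ is a bistellar $i$-flip, where $*$ denotes join. *)

theory Defs
  imports Main
begin

definition proper_ideal :: "nat \<Rightarrow> nat set set \<Rightarrow> bool" where
  "proper_ideal n \<Delta> \<longleftrightarrow> \<Delta> \<noteq> {} \<and> \<Delta> \<subseteq> Pow {1..n}
     \<and> (\<forall>A\<in>\<Delta>. \<forall>B. B \<subseteq> A \<longrightarrow> B \<in> \<Delta>) \<and> {1..n} \<notin> \<Delta>"

definition fnum :: "'v set set \<Rightarrow> nat \<Rightarrow> nat" where
  "fnum \<Gamma> j = card {F \<in> \<Gamma>. card F = j}"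

text \<open>Bier sphere: vertex d is Inl d, vertex bar d is Inr d.
  Face (B,C) is the vertex set B \<union> {bar d | d \<notin> C}.\<close>
definition bier :: "nat \<Rightarrow> nat set set \<Rightarrow> (nat + nat) set set" where
  "bier n \<Delta> = {Inl ` B \<union> Inr ` ({1..n} - C) | B C.
      B \<subset> C \<and> C \<subseteq> {1..n} \<and> B \<in> \<Delta> \<and> C \<notin> \<Delta>}"

text \<open>h-vector of a complex whose facets have m vertices.\<close>
definition hnum :: "nat \<Rightarrow> 'v set set \<Rightarrow> nat \<Rightarrow> int" where
  "hnum m \<Gamma> i = (if i \<le> m then
      (\<Sum>j=0..m. (-1)^(i+j) * int ((m - j) choose (m - i)) * int (fnum \<Gamma> j)) else 0)"

definition gnum :: "nat \<Rightarrow> 'v set set \<Rightarrow> nat \<Rightarrow> int" where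
  "gnum m \<Gamma> i = hnum m \<Gamma> i - (if i = 0 then 0 else hnum m \<Gamma> (i - 1))"

definition link :: "'v set set \<Rightarrow> 'v set \<Rightarrow> 'v set set" where
  "link \<Gamma> A = {F \<in> \<Gamma>. F \<inter> A = {} \<and> F \<union> A \<in> \<Gamma>}"

definition join :: "'v set set \<Rightarrow> 'v set set \<Rightarrow> 'v set set" where
  "join K L = {X \<union> Y | X Y. X \<in> K \<and> Y \<in> L}"

definition bdry :: "'v set \<Rightarrow> 'v set set" where
  "bdry V = {F. F \<subset> V}"

definition bistellar_flip :: "nat \<Rightarrow> nat \<Rightarrow> 'v set set \<Rightarrow> 'v set set \<Rightarrow> bool" where
  "bistellar_flip d i \<Gamma> \<Gamma>' \<longleftrightarrow> i \<le> d \<and> (\<exists>A B.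
      A \<in> \<Gamma> \<and> finite A \<and> card A = d - i + 1 \<and> finite B \<and> card B = i + 1 \<and>
      A \<inter> B = {} \<and> B \<notin> \<Gamma> \<and> link \<Gamma> A = bdry B \<and>
      \<Gamma>' = (\<Gamma> - join (Pow A) (bdry B)) \<union> join (bdry A) (Pow B))"

definition flip_step :: "nat \<Rightarrow> nat \<Rightarrow> 'v set set \<Rightarrow> 'v set set \<Rightarrow> bool" where
  "flip_step d k \<Gamma> \<Gamma>' \<longleftrightarrow> (\<exists>i. i \<le> k - 2 \<and> bistellar_flip d i \<Gamma> \<Gamma>')"

definition cx_iso :: "'v set set \<Rightarrow> 'w set set \<Rightarrow> bool" where
  "cx_iso \<Gamma> \<Gamma>' \<longleftrightarrow> (\<exists>g. inj_on g (\<Union>\<Gamma>) \<and> (\<lambda>F. g ` F) ` \<Gamma> = \<Gamma>')"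

end

theory Submission
  imports Defs
begin

text \<open>
  For a complex whose facets have \<open>n - 1\<close> vertices, \<open>g\<^sub>k\<close> is the sum over its faces \<open>F\<close> of the
  weight \<open>(-1)^(k + |F|) * C(n - |F|, n - k)\<close>. Over an interval \<open>{F. A \<subseteq> F \<subseteq> A \<union> B}\<close> with
  \<open>|A| + |B| = n\<close> these weights sum to \<open>[|A| = k]\<close>. The faces removed and added by a bistellar
  \<open>i\<close>-flip are differences of two such intervals, so the flip changes \<open>g\<^sub>k\<close> by
  \<open>[k = i + 1] - [k = n - 1 - i]\<close>; flips with \<open>i \<le> k - 2\<close> therefore preserve the value
  \<open>g\<^sub>k = 0\<close> of the boundary of a simplex. The same computation gives
  \<open>g\<^sub>k = f\<^sub>k(\<Delta>) - f\<^sub>n\<^sub>-\<^sub>k(\<Delta>)\<close> for a Bier sphere, and double counting the pairs \<open>X \<subseteq> T\<close> with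
  \<open>|X| = k\<close>, \<open>|T| = n - k\<close> shows that \<open>f\<^sub>k(\<Delta>) = f\<^sub>n\<^sub>-\<^sub>k(\<Delta>)\<close> only if \<open>f\<^sub>k(\<Delta>) = 0\<close> or \<open>\<Delta>\<close>
  contains all \<open>(n - k)\<close>-sets. Conversely, if \<open>f\<^sub>k(\<Delta>) = 0\<close>, removing maximal faces \<open>S\<close> of \<open>\<Delta>\<close>
  one at a time reverses \<open>(|S| - 1)\<close>-flips down to \<open>\<Delta> = {{}}\<close>, whose Bier sphere is the
  boundary of a simplex; the other case reduces to this one by Alexander duality.
\<close>

section \<open>The g-number as a sum over faces\<close>

definition g_weight :: "nat \<Rightarrow> nat \<Rightarrow> nat \<Rightarrow> int" where
  "g_weight n k j = (-1) ^ (k + j) * int ((n - j) choose (n - k))"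

definition g_sum :: "nat \<Rightarrow> nat \<Rightarrow> 'v set set \<Rightarrow> int" where
  "g_sum n k \<Gamma> = (\<Sum>F\<in>\<Gamma>. g_weight n k (card F))"

lemma gnum_eq_g_sum:
  assumes "finite \<Gamma>" and "\<forall>F\<in>\<Gamma>. card F \<le> n - 1" and "1 \<le> k" and "k \<le> n - 1"
  shows "gnum (n - 1) \<Gamma> k = g_sum n k \<Gamma>"
proof -
  obtain m where n: "n = Suc m"
    using assms(3,4) by (cases n) auto
  have pascal: "(-1) ^ (k + j) * int ((m - j) choose (m - k))
      - (-1) ^ (k - 1 + j) * int ((m - j) choose (m - (k - 1))) = g_weight n k j" if "j \<le> m" for j
  proof -
    have "(-1 :: int) ^ (k - 1 + j) = - ((-1) ^ (k + j))"
      using assms(3) by (cases k) simp_all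
    moreover have "m - (k - 1) = Suc (m - k)" and "n - j = Suc (m - j)" and "n - k = Suc (m - k)"
      using assms(3,4) n that by auto
    ultimately show ?thesis
      unfolding g_weight_def by (simp add: algebra_simps)
  qed
  have "gnum (n - 1) \<Gamma> k = (\<Sum>j=0..m. ((-1) ^ (k + j) * int ((m - j) choose (m - k))
      - (-1) ^ (k - 1 + j) * int ((m - j) choose (m - (k - 1)))) * int (fnum \<Gamma> j))"
    using assms(3,4) n by (simp add: gnum_def hnum_def sum_subtractf[symmetric] left_diff_distrib)
  also have "\<dots> = (\<Sum>j=0..m. g_weight n k j * int (fnum \<Gamma> j))"
    by (intro sum.cong refl) (simp only: pascal atLeastAtMost_iff)
  also have "\<dots> = (\<Sum>j=0..m. \<Sum>F\<in>{F\<in>\<Gamma>. card F = j}. g_weight n k (card F))"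
    unfolding fnum_def by (intro sum.cong refl) simp
  also have "\<dots> = g_sum n k \<Gamma>"
    unfolding g_sum_def by (rule sum.group) (use assms(1,2) n in auto)
  finally show ?thesis .
qed

lemma sum_Pow_insert:
  assumes "finite P" and "x \<notin> P"
  shows "(\<Sum>Y\<in>Pow (insert x P). f Y) = (\<Sum>Y\<in>Pow P. f Y) + (\<Sum>Y\<in>Pow P. f (insert x Y))"
proof -
  have "inj_on (insert x) (Pow P)"
    using assms(2) by (intro inj_onI) (metis PowD insert_ident subsetD)
  then show ?thesis
    unfolding Pow_insert using assms by (subst sum.union_disjoint) (auto simp: sum.reindex)
qed

lemma alternating_sum_Pow_choose:
  assumes "finite P"
  shows "(\<Sum>Y\<in>Pow P. (-1) ^ card Y * int ((card P - card Y) choose r)) = of_bool (card P = r)"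
  using assms
proof (induction P arbitrary: r rule: finite_induct)
  case (insert x P)
  have card_insert: "card (insert x Y) = Suc (card Y)" and card_le: "card Y \<le> card P"
    if "Y \<in> Pow P" for Y
  proof -
    have "finite Y" and "x \<notin> Y"
      using that insert.hyps finite_subset by auto
    then show "card (insert x Y) = Suc (card Y)"
      by simp
    show "card Y \<le> card P"
      using that insert.hyps by (simp add: card_mono)
  qed
  have step: "(\<Sum>Y\<in>Pow (insert x P). (-1) ^ card Y * int ((card (insert x P) - card Y) choose r))
      = (\<Sum>Y\<in>Pow P. (-1) ^ card Y * int ((Suc (card P) - card Y) choose r)
                    - (-1) ^ card Y * int ((card P - card Y) choose r))"
    unfolding sum_Pow_insert[OF insert.hyps] sum.distrib[symmetric]
    by (intro sum.cong refl) (simp add: card_insert)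
  show ?case
  proof (cases r)
    case 0
    then show ?thesis
      unfolding step using insert.hyps by simp
  next
    case (Suc r')
    have "(Suc (card P) - card Y) choose r = ((card P - card Y) choose r') + ((card P - card Y) choose r)"
      if "Y \<in> Pow P" for Y
      using card_le[OF that] Suc by (simp add: Suc_diff_le)
    then have "(\<Sum>Y\<in>Pow (insert x P). (-1) ^ card Y * int ((card (insert x P) - card Y) choose r))
        = (\<Sum>Y\<in>Pow P. (-1) ^ card Y * int ((card P - card Y) choose r'))"
      unfolding step by (auto simp: algebra_simps intro!: sum.cong)
    then show ?thesis
      using insert Suc by simp
  qed
qed simp

lemma sum_g_weight_Pow:
  assumes "finite B" and "a + card B = n" and "k \<le> n"
  shows "(\<Sum>Y\<in>Pow B. g_weight n k (a + card Y)) = of_bool (a = k)"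
proof -
  have "g_weight n k (a + card Y) = (-1) ^ (k + a) * ((-1) ^ card Y * int ((card B - card Y) choose (n - k)))"
    if "Y \<in> Pow B" for Y
  proof -
    have "n - (a + card Y) = card B - card Y"
      using assms that card_mono[of B Y] by auto
    then show ?thesis
      by (simp add: g_weight_def power_add)
  qed
  then have "(\<Sum>Y\<in>Pow B. g_weight n k (a + card Y))
      = (-1) ^ (k + a) * (\<Sum>Y\<in>Pow B. (-1) ^ card Y * int ((card B - card Y) choose (n - k)))"
    by (simp add: sum_distrib_left)
  also have "\<dots> = (-1) ^ (k + a) * of_bool (card B = n - k)"
    by (simp only: alternating_sum_Pow_choose[OF assms(1)])
  also have "\<dots> = of_bool (a = k)"
    using assms(2,3) by (auto simp: power_add[symmetric] mult_2[symmetric])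
  finally show ?thesis .
qed

section \<open>The g-number under bistellar flips\<close>

definition down_closed :: "'v set set \<Rightarrow> bool" where
  "down_closed \<Gamma> \<longleftrightarrow> (\<forall>F\<in>\<Gamma>. \<forall>G. G \<subseteq> F \<longrightarrow> G \<in> \<Gamma>)"

lemma join_commute: "join K L = join L K"
  unfolding join_def by blast

lemma join_Pow_bdry:
  assumes "A \<inter> B = {}"
  shows "join (Pow A) (bdry B) = {F. F \<subseteq> A \<union> B \<and> \<not> B \<subseteq> F}"
proof (intro set_eqI iffI)
  fix F assume "F \<in> {F. F \<subseteq> A \<union> B \<and> \<not> B \<subseteq> F}"
  then have "F = (F \<inter> A) \<union> (F \<inter> B)" and "F \<inter> A \<in> Pow A" and "F \<inter> B \<in> bdry B"
    unfolding bdry_def by auto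
  then show "F \<in> join (Pow A) (bdry B)"
    unfolding join_def by blast
qed (use assms in \<open>auto simp: join_def bdry_def\<close>)

lemma join_bdry_Pow:
  assumes "A \<inter> B = {}"
  shows "join (bdry A) (Pow B) = {F. F \<subseteq> A \<union> B \<and> \<not> A \<subseteq> F}"
  using join_Pow_bdry[of B A] assms by (auto simp: join_commute[of "bdry A"])

lemma g_sum_join_Pow_bdry:
  assumes "finite A" and "finite B" and "A \<inter> B = {}" and "card A + card B = n" and "k \<le> n"
  shows "g_sum n k (join (Pow A) (bdry B)) = of_bool (k = 0) - of_bool (card B = k)"
proof -
  have inj: "inj_on ((\<union>) B) (Pow A)"
    using assms(3) by (intro inj_onI) blast
  have split: "join (Pow A) (bdry B) = Pow (A \<union> B) - (\<union>) B ` Pow A"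
    unfolding join_Pow_bdry[OF assms(3)] by auto
  have "g_sum n k (Pow (A \<union> B)) = (\<Sum>Y\<in>Pow (A \<union> B). g_weight n k (0 + card Y))"
    unfolding g_sum_def by simp
  also have "\<dots> = of_bool (k = 0)"
    using assms by (subst sum_g_weight_Pow) (auto simp: card_Un_disjoint)
  finally have all: "g_sum n k (Pow (A \<union> B)) = of_bool (k = 0)" .
  have "g_sum n k ((\<union>) B ` Pow A) = (\<Sum>X\<in>Pow A. g_weight n k (card B + card X))"
    unfolding g_sum_def sum.reindex[OF inj] using assms(1-3)
    by (intro sum.cong refl) (auto intro!: arg_cong[where f = "g_weight n k"] card_Un_disjoint
        dest: finite_subset)
  also have "\<dots> = of_bool (card B = k)"
    using assms by (subst sum_g_weight_Pow) auto
  finally have above_B: "g_sum n k ((\<union>) B ` Pow A) = of_bool (card B = k)" .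
  show ?thesis
    unfolding split g_sum_def using assms(1,2)
    by (subst sum_diff) (auto simp: all[unfolded g_sum_def] above_B[unfolded g_sum_def])
qed

lemma bistellar_flipE:
  assumes "bistellar_flip d i \<Gamma> \<Gamma>'" and "down_closed \<Gamma>"
  obtains A B where "finite A" "finite B" "A \<inter> B = {}" "card A = d - i + 1" "card B = i + 1"
    "i \<le> d" "link \<Gamma> A = bdry B"
    "join (Pow A) (bdry B) \<subseteq> \<Gamma>"
    "\<Gamma> \<inter> join (bdry A) (Pow B) \<subseteq> join (Pow A) (bdry B)"
    "\<Gamma>' = (\<Gamma> - join (Pow A) (bdry B)) \<union> join (bdry A) (Pow B)"
proof -
  obtain A B where flip: "i \<le> d" "A \<in> \<Gamma>" "finite A" "card A = d - i + 1" "finite B"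
      "card B = i + 1" "A \<inter> B = {}" "B \<notin> \<Gamma>" "link \<Gamma> A = bdry B"
      "\<Gamma>' = (\<Gamma> - join (Pow A) (bdry B)) \<union> join (bdry A) (Pow B)"
    using assms(1) unfolding bistellar_flip_def by blast
  have "F \<in> \<Gamma>" if "F \<subseteq> A \<union> B" and "\<not> B \<subseteq> F" for F
  proof -
    have "F \<inter> B \<in> link \<Gamma> A"
      using that flip(9) by (auto simp: bdry_def)
    then have "(F \<inter> B) \<union> A \<in> \<Gamma>"
      unfolding link_def by blast
    moreover have "F \<subseteq> (F \<inter> B) \<union> A"
      using that(1) by blast
    ultimately show ?thesis
      using assms(2) unfolding down_closed_def by blast
  qed
  then have "join (Pow A) (bdry B) \<subseteq> \<Gamma>"
    unfolding join_Pow_bdry[OF flip(7)] by blast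
  moreover have "\<Gamma> \<inter> join (bdry A) (Pow B) \<subseteq> join (Pow A) (bdry B)"
    using flip(8) assms(2)
    unfolding join_bdry_Pow[OF flip(7)] join_Pow_bdry[OF flip(7)] down_closed_def by blast
  ultimately show ?thesis
    using that flip by blast
qed

lemma bistellar_flip_preserves_complex:
  assumes "bistellar_flip d i \<Gamma> \<Gamma>'" and "finite \<Gamma>" and "down_closed \<Gamma>"
  shows "finite \<Gamma>'" and "down_closed \<Gamma>'"
proof -
  obtain A B where AB: "finite A" "finite B" "A \<inter> B = {}" "link \<Gamma> A = bdry B"
      "\<Gamma>' = (\<Gamma> - join (Pow A) (bdry B)) \<union> join (bdry A) (Pow B)"
    using bistellar_flipE[OF assms(1,3)] by metis
  have "join (bdry A) (Pow B) \<subseteq> Pow (A \<union> B)"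
    unfolding join_bdry_Pow[OF AB(3)] by blast
  then show "finite \<Gamma>'"
    unfolding AB(5) using assms(2) AB(1,2) by (simp add: finite_subset)
  have "G \<in> \<Gamma>'" if "F \<in> \<Gamma>'" and "G \<subseteq> F" for F G
  proof (cases "F \<in> join (bdry A) (Pow B)")
    case True
    then show ?thesis
      using that(2) unfolding AB(5) join_bdry_Pow[OF AB(3)] by auto
  next
    case False
    then have F: "F \<in> \<Gamma>" "F \<notin> join (Pow A) (bdry B)"
      using that(1) unfolding AB(5) by auto
    have "G \<in> \<Gamma>"
      using F(1) that(2) assms(3) unfolding down_closed_def by blast
    moreover have "\<not> A \<subseteq> G" if "G \<in> join (Pow A) (bdry B)"
    proof
      assume "A \<subseteq> G"
      have "F - A \<in> link \<Gamma> A"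
        using F(1) \<open>A \<subseteq> G\<close> \<open>G \<subseteq> F\<close> assms(3) unfolding link_def down_closed_def
        by (auto simp: Un_absorb2)
      then have "F - A \<subset> B"
        unfolding AB(4) bdry_def by blast
      then have "F \<in> join (Pow A) (bdry B)"
        unfolding join_Pow_bdry[OF AB(3)] using AB(3) by auto
      with F(2) show False ..
    qed
    ultimately show ?thesis
      unfolding AB(5) join_Pow_bdry[OF AB(3)] join_bdry_Pow[OF AB(3)] by blast
  qed
  then show "down_closed \<Gamma>'"
    unfolding down_closed_def by blast
qed

lemma g_sum_bistellar_flip:
  assumes "bistellar_flip d i \<Gamma> \<Gamma>'" and "finite \<Gamma>" and "down_closed \<Gamma>" and "k \<le> d + 2"
  shows "g_sum (d + 2) k \<Gamma>' = g_sum (d + 2) k \<Gamma> + of_bool (k = i + 1) - of_bool (k = d + 1 - i)"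
proof -
  obtain A B where AB: "finite A" "finite B" "A \<inter> B = {}" "card A = d - i + 1" "card B = i + 1"
      "i \<le> d" "join (Pow A) (bdry B) \<subseteq> \<Gamma>" "\<Gamma> \<inter> join (bdry A) (Pow B) \<subseteq> join (Pow A) (bdry B)"
      "\<Gamma>' = (\<Gamma> - join (Pow A) (bdry B)) \<union> join (bdry A) (Pow B)"
    using bistellar_flipE[OF assms(1,3)] by metis
  let ?removed = "join (Pow A) (bdry B)" and ?added = "join (bdry A) (Pow B)"
  have "finite ?added"
    using AB(1,2) finite_subset[of ?added "Pow (A \<union> B)"] unfolding join_bdry_Pow[OF AB(3)] by blast
  moreover have "finite ?removed"
    using AB(7) assms(2) finite_subset by blast
  ultimately have "g_sum (d + 2) k \<Gamma>'
      = g_sum (d + 2) k \<Gamma> - g_sum (d + 2) k ?removed + g_sum (d + 2) k ?added"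
    unfolding g_sum_def AB(9) using assms(2) AB(7,8)
    by (subst sum.union_disjoint) (auto simp: sum_diff)
  moreover have "g_sum (d + 2) k ?removed = of_bool (k = 0) - of_bool (k = i + 1)"
    using AB assms(4) by (subst g_sum_join_Pow_bdry) auto
  moreover have "g_sum (d + 2) k ?added = of_bool (k = 0) - of_bool (k = d + 1 - i)"
    using AB assms(4) by (subst join_commute, subst g_sum_join_Pow_bdry) auto
  ultimately show ?thesis
    by simp
qed

lemma g_sum_bdry:
  assumes "finite V" and "card V = n" and "k \<le> n"
  shows "g_sum n k (bdry V) = of_bool (k = 0) - of_bool (k = n)"
proof -
  have "bdry V = join (Pow {}) (bdry V)"
    using join_Pow_bdry[of "{}" V] unfolding bdry_def by auto
  then show ?thesis
    using assms g_sum_join_Pow_bdry[of "{}" V n k] by simp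
qed

lemma finite_down_closed_bdry: "finite V \<Longrightarrow> finite (bdry V)" "down_closed (bdry V)"
  unfolding bdry_def down_closed_def by (auto intro: finite_subset[of _ "Pow V"])

lemma g_sum_flip_reachable:
  assumes "(flip_step d k)\<^sup>*\<^sup>* (bdry V) \<Gamma>" and "finite V" and "card V = d + 2"
    and "2 \<le> k" and "2 * k \<le> d + 2"
  shows "g_sum (d + 2) k \<Gamma> = 0"
proof -
  have "finite \<Gamma> \<and> down_closed \<Gamma> \<and> g_sum (d + 2) k \<Gamma> = 0"
    using assms(1)
  proof (induction rule: rtranclp_induct)
    case base
    then show ?case
      using assms(2-5) by (simp add: finite_down_closed_bdry g_sum_bdry)
  next
    case (step \<Gamma>1 \<Gamma>2)
    then obtain i where "i \<le> k - 2" and flip: "bistellar_flip d i \<Gamma>1 \<Gamma>2"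
      unfolding flip_step_def by blast
    moreover have "i \<le> d"
      using flip unfolding bistellar_flip_def by blast
    ultimately show ?case
      using step.IH assms(4,5) bistellar_flip_preserves_complex[OF flip] g_sum_bistellar_flip[OF flip]
      by auto
  qed
  then show ?thesis
    by blast
qed

lemma g_sum_cx_iso:
  assumes "cx_iso \<Gamma> \<Gamma>'"
  shows "g_sum n k \<Gamma>' = g_sum n k \<Gamma>"
proof -
  obtain g where g: "inj_on g (\<Union>\<Gamma>)" and img: "(\<lambda>F. g ` F) ` \<Gamma> = \<Gamma>'"
    using assms unfolding cx_iso_def by blast
  have "inj_on (\<lambda>F. g ` F) \<Gamma>"
    using g by (intro inj_onI) (meson Sup_upper inj_on_image_eq_iff)
  moreover have "card (g ` F) = card F" if "F \<in> \<Gamma>" for F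
    using g that by (meson Sup_upper card_image inj_on_subset)
  ultimately show ?thesis
    unfolding g_sum_def img[symmetric] by (simp add: sum.reindex)
qed

lemma cx_iso_refl: "cx_iso \<Gamma> \<Gamma>"
  unfolding cx_iso_def by (intro exI[of _ id]) simp

section \<open>The g-number of a Bier sphere\<close>

lemma Plus_cases:
  obtains L R where "F = L <+> R"
proof -
  have "F = (Inl -` F) <+> (Inr -` F)"
  proof (rule set_eqI)
    fix x :: "'a + 'b"
    show "x \<in> F \<longleftrightarrow> x \<in> (Inl -` F) <+> (Inr -` F)"
      by (cases x) auto
  qed
  then show ?thesis
    using that by blast
qed

lemma vimage_Inl_Plus [simp]: "Inl -` (A <+> B) = A"
  and vimage_Inr_Plus [simp]: "Inr -` (A <+> B) = B"
  by (auto simp: Plus_def)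

lemma Plus_eq_Plus_iff: "A <+> B = C <+> D \<longleftrightarrow> A = C \<and> B = D"
proof
  assume eq: "A <+> B = C <+> D"
  show "A = C \<and> B = D"
    using arg_cong[OF eq, of "vimage Inl"] arg_cong[OF eq, of "vimage Inr"] by simp
qed simp

lemma Plus_Un_Plus: "(A <+> B) \<union> (C <+> D) = (A \<union> C) <+> (B \<union> D)"
  and Plus_Int_Plus: "(A <+> B) \<inter> (C <+> D) = (A \<inter> C) <+> (B \<inter> D)"
  and Plus_subset_Plus_iff: "A <+> B \<subseteq> C <+> D \<longleftrightarrow> A \<subseteq> C \<and> B \<subseteq> D"
  by (auto simp: Plus_def)

lemma swap_image_Plus: "case_sum Inr Inl ` (A <+> B) = B <+> A"
  by (auto simp: Plus_def image_Un image_image)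

lemma proper_idealD:
  assumes "proper_ideal n \<Delta>"
  shows "finite \<Delta>" and "{} \<in> \<Delta>" and "{1..n} \<notin> \<Delta>"
    and "B \<in> \<Delta> \<Longrightarrow> B \<subseteq> {1..n}" and "B \<in> \<Delta> \<Longrightarrow> A \<subseteq> B \<Longrightarrow> A \<in> \<Delta>"
    and "B \<in> \<Delta> \<Longrightarrow> finite B"
  using assms finite_subset[of \<Delta> "Pow {1..n}"] finite_subset[of B "{1..n}"]
  unfolding proper_ideal_def by auto

lemma Plus_mem_bier_iff:
  assumes "proper_ideal n \<Delta>"
  shows "L <+> R \<in> bier n \<Delta> \<longleftrightarrow> L \<in> \<Delta> \<and> R \<subseteq> {1..n} - L \<and> {1..n} - R \<notin> \<Delta>"
proof
  assume "L <+> R \<in> bier n \<Delta>"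
  then obtain B C where "L <+> R = B <+> ({1..n} - C)" "B \<subset> C" "C \<subseteq> {1..n}" "B \<in> \<Delta>" "C \<notin> \<Delta>"
    unfolding bier_def Plus_def by blast
  moreover have "{1..n} - ({1..n} - C) = C"
    using \<open>C \<subseteq> {1..n}\<close> by blast
  ultimately show "L \<in> \<Delta> \<and> R \<subseteq> {1..n} - L \<and> {1..n} - R \<notin> \<Delta>"
    by (auto simp: Plus_eq_Plus_iff)
next
  assume LR: "L \<in> \<Delta> \<and> R \<subseteq> {1..n} - L \<and> {1..n} - R \<notin> \<Delta>"
  then have "L \<subset> {1..n} - R" and "R = {1..n} - ({1..n} - R)"
    using proper_idealD(4)[OF assms] by auto
  then show "L <+> R \<in> bier n \<Delta>"
    unfolding bier_def Plus_def[symmetric] mem_Collect_eq using LR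
    by (intro exI[of _ L] exI[of _ "{1..n} - R"]) simp
qed

lemma bier_finite_faces:
  assumes \<Delta>: "proper_ideal n \<Delta>"
  shows "finite (bier n \<Delta>)" and "F \<in> bier n \<Delta> \<Longrightarrow> card F \<le> n - 1"
proof -
  show "finite (bier n \<Delta>)"
    using finite_subset[of "bier n \<Delta>" "Pow ({1..n} <+> {1..n})"] proper_idealD(4)[OF \<Delta>]
    unfolding bier_def Plus_def by blast
next
  obtain L R where F: "F = L <+> R"
    by (rule Plus_cases)
  assume "F \<in> bier n \<Delta>"
  then have L: "L \<in> \<Delta>" and R: "R \<subseteq> {1..n} - L" and "{1..n} - R \<notin> \<Delta>"
    unfolding F Plus_mem_bier_iff[OF \<Delta>] by blast+
  then have "L \<union> R \<noteq> {1..n}"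
    using proper_idealD(5)[OF \<Delta> L, of "{1..n} - R"] by blast
  moreover have "L \<union> R \<subseteq> {1..n}"
    using L R proper_idealD(4)[OF \<Delta>] by blast
  ultimately have "card (L \<union> R) < n"
    using psubset_card_mono[of "{1..n}" "L \<union> R"] by auto
  moreover have "finite L" and "finite R"
    using \<open>L \<union> R \<subseteq> {1..n}\<close> finite_subset[of _ "{1..n}"] by blast+
  moreover have "card (L \<union> R) = card L + card R"
    using \<open>finite L\<close> \<open>finite R\<close> R by (intro card_Un_disjoint) auto
  ultimately show "card F \<le> n - 1"
    unfolding F by (simp add: card_Plus)
qed

lemma int_fnum_eq_sum:
  assumes "finite \<Delta>"
  shows "int (fnum \<Delta> j) = (\<Sum>B\<in>\<Delta>. of_bool (card B = j))"
  using assms unfolding fnum_def by (simp add: Int_def)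

lemma bier_eq_image_Plus:
  assumes \<Delta>: "proper_ideal n \<Delta>"
  shows "bier n \<Delta> = (\<lambda>(B, Y). B <+> Y) ` {(B, Y). B \<in> \<Delta> \<and> Y \<subseteq> {1..n} - B \<and> {1..n} - Y \<notin> \<Delta>}"
proof (intro set_eqI iffI)
  fix F assume "F \<in> bier n \<Delta>"
  moreover obtain L R where "F = L <+> R"
    by (rule Plus_cases)
  ultimately show "F \<in> (\<lambda>(B, Y). B <+> Y) ` {(B, Y). B \<in> \<Delta> \<and> Y \<subseteq> {1..n} - B \<and> {1..n} - Y \<notin> \<Delta>}"
    by (auto simp: Plus_mem_bier_iff[OF \<Delta>])
qed (auto simp: Plus_mem_bier_iff[OF \<Delta>])

lemma sum_g_weight_disjoint_pairs:
  assumes \<Delta>: "proper_ideal n \<Delta>" and "k \<le> n"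
  shows "(\<Sum>(B, Y)\<in>Sigma \<Delta> (\<lambda>B. Pow ({1..n} - B)). g_weight n k (card B + card Y)) = int (fnum \<Delta> k)"
proof -
  have "(\<Sum>Y\<in>Pow ({1..n} - B). g_weight n k (card B + card Y)) = of_bool (card B = k)"
    if "B \<in> \<Delta>" for B
    using that proper_idealD(4,6)[OF \<Delta>] card_mono[of "{1..n}" B] assms(2)
    by (intro sum_g_weight_Pow) (auto simp: card_Diff_subset)
  then show ?thesis
    using proper_idealD(1)[OF \<Delta>] by (simp add: sum.Sigma[symmetric] int_fnum_eq_sum)
qed

lemma sum_g_weight_pairs_compl_mem:
  assumes \<Delta>: "proper_ideal n \<Delta>" and "k \<le> n"
  shows "(\<Sum>(B, Y)\<in>{(B, Y). B \<in> \<Delta> \<and> Y \<subseteq> {1..n} - B \<and> {1..n} - Y \<in> \<Delta>}.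
      g_weight n k (card B + card Y)) = int (fnum \<Delta> (n - k))"
    (is "sum ?w ?Q = _")
proof -
  have Q: "?Q = (\<lambda>(C, B). (B, {1..n} - C)) ` Sigma \<Delta> Pow"
  proof (intro set_eqI iffI)
    fix p assume "p \<in> ?Q"
    then obtain B Y where "p = (B, Y)" "B \<in> \<Delta>" "Y \<subseteq> {1..n} - B" "{1..n} - Y \<in> \<Delta>"
      by blast
    then show "p \<in> (\<lambda>(C, B). (B, {1..n} - C)) ` Sigma \<Delta> Pow"
      using proper_idealD(4)[OF \<Delta>] by (intro rev_image_eqI[of "({1..n} - Y, B)"]) auto
  qed (use proper_idealD(4,5)[OF \<Delta>] in \<open>auto simp: double_diff\<close>)
  have "inj_on (\<lambda>(C, B). (B, {1..n} - C)) (Sigma \<Delta> Pow)"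
    using proper_idealD(4)[OF \<Delta>] by (intro inj_onI) (clarsimp, metis Diff_Diff_Int inf.absorb2)
  then have "sum ?w ?Q = (\<Sum>(C, B)\<in>Sigma \<Delta> Pow. g_weight n k (card B + card ({1..n} - C)))"
    unfolding Q by (simp add: sum.reindex case_prod_beta')
  also have "\<dots> = (\<Sum>C\<in>\<Delta>. \<Sum>B\<in>Pow C. g_weight n k ((n - card C) + card B))"
    using proper_idealD(1,4,6)[OF \<Delta>] by (simp add: sum.Sigma[symmetric] card_Diff_subset add.commute)
  also have "\<dots> = (\<Sum>C\<in>\<Delta>. of_bool (card C = n - k))"
  proof (intro sum.cong refl)
    fix C assume "C \<in> \<Delta>"
    then have "card C \<le> n" and "finite C"
      using proper_idealD(4,6)[OF \<Delta>] card_mono[of "{1..n}" C] by auto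
    then show "(\<Sum>B\<in>Pow C. g_weight n k ((n - card C) + card B)) = of_bool (card C = n - k)"
      using assms(2) by (subst sum_g_weight_Pow) auto
  qed
  finally show ?thesis
    using proper_idealD(1)[OF \<Delta>] by (simp add: int_fnum_eq_sum)
qed

text \<open>
  The pairs \<open>(B, Y)\<close> with \<open>B \<in> \<Delta>\<close> and \<open>Y \<subseteq> {1..n} - B\<close> split into the faces \<open>B <+> Y\<close> of the
  Bier sphere and the pairs with \<open>{1..n} - Y \<in> \<Delta>\<close>.
\<close>

lemma g_sum_bier:
  assumes \<Delta>: "proper_ideal n \<Delta>" and "k \<le> n"
  shows "g_sum n k (bier n \<Delta>) = int (fnum \<Delta> k) - int (fnum \<Delta> (n - k))"
proof -
  let ?w = "\<lambda>(B, Y). g_weight n k (card B + card Y)"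
  define P where "P = {(B, Y). B \<in> \<Delta> \<and> Y \<subseteq> {1..n} - B \<and> {1..n} - Y \<notin> \<Delta>}"
  define Q where "Q = {(B, Y). B \<in> \<Delta> \<and> Y \<subseteq> {1..n} - B \<and> {1..n} - Y \<in> \<Delta>}"
  have inj: "inj_on (\<lambda>(B, Y). B <+> Y) P"
  proof (rule inj_onI)
    fix p q :: "nat set \<times> nat set"
    show "(case p of (B, Y) \<Rightarrow> B <+> Y) = (case q of (B, Y) \<Rightarrow> B <+> Y) \<Longrightarrow> p = q"
      by (cases p, cases q) (simp add: Plus_eq_Plus_iff)
  qed
  have "card (B <+> Y) = card B + card Y" if "(B, Y) \<in> P" for B Y
    using that proper_idealD(6)[OF \<Delta>] finite_subset[of Y "{1..n}"] unfolding P_def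
    by (intro card_Plus) blast+
  then have "g_sum n k (bier n \<Delta>) = sum ?w P"
    unfolding g_sum_def bier_eq_image_Plus[OF \<Delta>] P_def[symmetric] sum.reindex[OF inj]
    by (intro sum.cong) auto
  also have "\<dots> = sum ?w (Sigma \<Delta> (\<lambda>B. Pow ({1..n} - B))) - sum ?w Q"
  proof -
    have "Sigma \<Delta> (\<lambda>B. Pow ({1..n} - B)) = P \<union> Q" and "P \<inter> Q = {}"
      unfolding P_def Q_def by auto
    moreover have "finite (Sigma \<Delta> (\<lambda>B. Pow ({1..n} - B)))"
      by (rule finite_SigmaI) (use proper_idealD(1)[OF \<Delta>] in simp_all)
    ultimately show ?thesis
      by (simp add: sum.union_disjoint)
  qed
  finally show ?thesis
    unfolding Q_def using sum_g_weight_disjoint_pairs[OF assms] sum_g_weight_pairs_compl_mem[OF assms]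
    by simp
qed

lemma gnum_bier:
  assumes "proper_ideal n \<Delta>" and "1 \<le> k" and "k \<le> n - 1"
  shows "gnum (n - 1) (bier n \<Delta>) k = int (fnum \<Delta> k) - int (fnum \<Delta> (n - k))"
proof -
  have "gnum (n - 1) (bier n \<Delta>) k = g_sum n k (bier n \<Delta>)"
    using assms bier_finite_faces[OF assms(1)] by (intro gnum_eq_g_sum) auto
  then show ?thesis
    using assms g_sum_bier[OF assms(1)] by simp
qed

lemma fnum_balanced_if_flip_reachable:
  assumes \<Delta>: "proper_ideal n \<Delta>" and "2 \<le> k" and "2 * k \<le> n"
    and "finite V" and "card V = n" and "(flip_step (n - 2) k)\<^sup>*\<^sup>* (bdry V) \<Gamma>"
    and "cx_iso \<Gamma> (bier n \<Delta>)"
  shows "fnum \<Delta> k = fnum \<Delta> (n - k)"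
proof -
  have "g_sum n k \<Gamma> = 0"
    using g_sum_flip_reachable[of "n - 2" k V \<Gamma>] assms(2-6) by simp
  then show ?thesis
    using g_sum_cx_iso[OF assms(7)] g_sum_bier[OF \<Delta>] assms(3) by simp
qed

section \<open>Ideals with equal k-th and (n-k)-th f-numbers\<close>

lemma card_supersets_with_card:
  assumes "finite U" and "X \<subseteq> U" and "card X \<le> m"
  shows "card {T. X \<subseteq> T \<and> T \<subseteq> U \<and> card T = m} = (card U - card X) choose (m - card X)"
proof -
  have fin: "finite X"
    using assms(1,2) finite_subset by blast
  have "bij_betw (\<lambda>W. X \<union> W) {W. W \<subseteq> U - X \<and> card W = m - card X}
      {T. X \<subseteq> T \<and> T \<subseteq> U \<and> card T = m}"
  proof (rule bij_betw_byWitness[where f' = "\<lambda>T. T - X"])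
    have "card (X \<union> W) = m" if "W \<subseteq> U - X" and "card W = m - card X" for W
      using that assms fin finite_subset[of W U] by (subst card_Un_disjoint) auto
    then show "(\<lambda>W. X \<union> W) ` {W. W \<subseteq> U - X \<and> card W = m - card X}
        \<subseteq> {T. X \<subseteq> T \<and> T \<subseteq> U \<and> card T = m}"
      using assms by auto
    show "(\<lambda>T. T - X) ` {T. X \<subseteq> T \<and> T \<subseteq> U \<and> card T = m} \<subseteq> {W. W \<subseteq> U - X \<and> card W = m - card X}"
      using fin by (auto simp: card_Diff_subset)
  qed auto
  then show ?thesis
    using assms by (simp add: bij_betw_same_card[symmetric] n_subsets card_Diff_subset finite_subset)
qed

lemma card_face_subset_pairs:
  assumes "finite \<Delta>" and "\<forall>T\<in>\<Delta>. finite T"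
  shows "card {(X, T). T \<in> \<Delta> \<and> card T = m \<and> X \<subseteq> T \<and> card X = k} = fnum \<Delta> m * (m choose k)"
proof -
  have "{(X, T). T \<in> \<Delta> \<and> card T = m \<and> X \<subseteq> T \<and> card X = k}
      = prod.swap ` Sigma {T \<in> \<Delta>. card T = m} (\<lambda>T. {X. X \<subseteq> T \<and> card X = k})"
    by auto
  moreover have "card (Sigma {T \<in> \<Delta>. card T = m} (\<lambda>T. {X. X \<subseteq> T \<and> card X = k}))
      = fnum \<Delta> m * (m choose k)"
    using assms by (simp add: card_SigmaI n_subsets fnum_def)
  ultimately show ?thesis
    by (simp add: card_image)
qed

lemma card_face_superset_pairs:
  assumes "\<Delta> \<subseteq> Pow {1..n}" and "k \<le> m"
  shows "card {(X, T). X \<in> \<Delta> \<and> card X = k \<and> X \<subseteq> T \<and> T \<subseteq> {1..n} \<and> card T = m}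
    = fnum \<Delta> k * ((n - k) choose (m - k))"
proof -
  have "finite \<Delta>"
    using assms(1) finite_subset by blast
  moreover have "card {T. X \<subseteq> T \<and> T \<subseteq> {1..n} \<and> card T = m} = (n - k) choose (m - k)"
    if "X \<in> \<Delta>" and "card X = k" for X
    using that assms by (subst card_supersets_with_card) auto
  moreover have "{(X, T). X \<in> \<Delta> \<and> card X = k \<and> X \<subseteq> T \<and> T \<subseteq> {1..n} \<and> card T = m}
      = Sigma {X \<in> \<Delta>. card X = k} (\<lambda>X. {T. X \<subseteq> T \<and> T \<subseteq> {1..n} \<and> card T = m})"
    by auto
  ultimately show ?thesis
    unfolding fnum_def by (simp add: card_SigmaI)
qed

context
  fixes n k :: nat and \<Delta> :: "nat set set"
  assumes \<Delta>: "proper_ideal n \<Delta>" and k: "2 * k \<le> n"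
begin

private abbreviation (input) "subset_pairs \<equiv>
  {(X, T). T \<in> \<Delta> \<and> card T = n - k \<and> X \<subseteq> T \<and> card X = k}"

private abbreviation (input) "superset_pairs \<equiv>
  {(X, T). X \<in> \<Delta> \<and> card X = k \<and> X \<subseteq> T \<and> T \<subseteq> {1..n} \<and> card T = n - k}"

private lemma pair_counts:
  "subset_pairs \<subseteq> superset_pairs" "finite superset_pairs"
  "card subset_pairs = fnum \<Delta> (n - k) * ((n - k) choose k)"
  "card superset_pairs = fnum \<Delta> k * ((n - k) choose k)"
  "0 < (n - k) choose k"
proof -
  show "subset_pairs \<subseteq> superset_pairs"
    using proper_idealD(4,5)[OF \<Delta>] by auto
  show "finite superset_pairs"
    by (rule finite_subset[of _ "Pow {1..n} \<times> Pow {1..n}"]) auto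
  show "card subset_pairs = fnum \<Delta> (n - k) * ((n - k) choose k)"
    using proper_idealD(1,6)[OF \<Delta>] by (intro card_face_subset_pairs) auto
  have "(n - k) choose (n - k - k) = (n - k) choose k"
    using k by (subst binomial_symmetric) auto
  then show "card superset_pairs = fnum \<Delta> k * ((n - k) choose k)"
    using \<Delta> k by (subst card_face_superset_pairs) (auto simp: proper_ideal_def)
  show "0 < (n - k) choose k"
    using k by simp
qed

lemma fnum_complement_le: "fnum \<Delta> (n - k) \<le> fnum \<Delta> k"
  using card_mono[OF pair_counts(2,1)] pair_counts(3-5) by simp

lemma fnum_complement_eq_imp_superset_mem:
  assumes "fnum \<Delta> k = fnum \<Delta> (n - k)"
    and "X \<in> \<Delta>" and "card X = k" and "X \<subseteq> T" and "T \<subseteq> {1..n}" and "card T = n - k"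
  shows "T \<in> \<Delta>"
proof -
  have "subset_pairs = superset_pairs"
    using card_subset_eq[OF pair_counts(2,1)] pair_counts(3,4) assms(1) by simp
  then show ?thesis
    using assms(2-6) by blast
qed

end

lemma exchange_closed_contains_all:
  assumes "T0 \<in> \<F>" and "finite T0"
    and exchange: "\<And>T x y. T \<in> \<F> \<Longrightarrow> x \<in> U - T \<Longrightarrow> y \<in> T \<Longrightarrow> insert x (T - {y}) \<in> \<F>"
    and "T \<subseteq> U" and "finite T" and "card T = card T0"
  shows "T \<in> \<F>"
  using assms(1,2,6)
proof (induction "card (T0 - T)" arbitrary: T0 rule: less_induct)
  case less
  show ?case
  proof (cases "T0 \<subseteq> T")
    case True
    then show ?thesis
      using less.prems card_subset_eq[OF \<open>finite T\<close>] by metis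
  next
    case False
    then obtain y where y: "y \<in> T0" "y \<notin> T"
      by blast
    have "\<not> T \<subseteq> T0"
      using card_subset_eq[OF \<open>finite T0\<close>] less.prems(3) y by metis
    then obtain x where x: "x \<in> T" "x \<notin> T0"
      by blast
    define T1 where "T1 = insert x (T0 - {y})"
    have "T1 \<in> \<F>"
      unfolding T1_def using exchange[OF less.prems(1)] x y \<open>T \<subseteq> U\<close> by blast
    moreover have "T1 - T = (T0 - T) - {y}"
      unfolding T1_def using x y by auto
    then have "card (T1 - T) < card (T0 - T)"
      using y less.prems(2) card_Diff1_less[of "T0 - T" y] by simp
    moreover have "finite T1" and "card T = card T1"
      unfolding T1_def using less.prems(2,3) x y card_gt_0_iff[of T0] by (auto simp: card_insert_if)
    ultimately show ?thesis
      using less.hyps by blast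
  qed
qed

lemma fnum_le_choose:
  assumes "\<Delta> \<subseteq> Pow {1..n}"
  shows "fnum \<Delta> j \<le> n choose j"
  using card_mono[of "{T. T \<subseteq> {1..n} \<and> card T = j}" "{F \<in> \<Delta>. card F = j}"] assms
  unfolding fnum_def by (auto simp: n_subsets)

lemma fnum_eq_choose_iff:
  assumes "\<Delta> \<subseteq> Pow {1..n}"
  shows "fnum \<Delta> j = n choose j \<longleftrightarrow> (\<forall>T. T \<subseteq> {1..n} \<and> card T = j \<longrightarrow> T \<in> \<Delta>)"
proof -
  let ?L = "{T. T \<subseteq> {1..n} \<and> card T = j}"
  have sub: "{F \<in> \<Delta>. card F = j} \<subseteq> ?L" and fin: "finite ?L" and card: "card ?L = n choose j"
    using assms by (auto simp: n_subsets)
  have "fnum \<Delta> j = n choose j \<longleftrightarrow> {F \<in> \<Delta>. card F = j} = ?L"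
    using card_subset_eq[OF fin sub] card unfolding fnum_def by auto
  also have "\<dots> \<longleftrightarrow> (\<forall>T. T \<subseteq> {1..n} \<and> card T = j \<longrightarrow> T \<in> \<Delta>)"
    using sub by blast
  finally show ?thesis .
qed

lemma fnum_complement_eq_imp_all_mem:
  assumes \<Delta>: "proper_ideal n \<Delta>" and k: "2 * k < n" and eq: "fnum \<Delta> k = fnum \<Delta> (n - k)"
    and "T0 \<in> \<Delta>" and "card T0 = n - k" and "T \<subseteq> {1..n}" and "card T = n - k"
  shows "T \<in> \<Delta>"
proof -
  have "T \<in> {T \<in> \<Delta>. card T = n - k}"
  proof (rule exchange_closed_contains_all[of T0 _ "{1..n}"])
    fix T' x y
    assume T': "T' \<in> {T \<in> \<Delta>. card T = n - k}" and x: "x \<in> {1..n} - T'" and y: "y \<in> T'"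
    have "finite T'"
      using T' proper_idealD(6)[OF \<Delta>] by blast
    then have "k \<le> card (T' - {y})"
      using T' y k by simp
    then obtain X where X: "X \<subseteq> T' - {y}" "card X = k"
      by (meson obtain_subset_with_card_n)
    moreover have "X \<in> \<Delta>"
      using X T' proper_idealD(5)[OF \<Delta>] by blast
    moreover have "card (insert x (T' - {y})) = n - k"
      using \<open>finite T'\<close> T' x y k by (simp add: card_insert_if)
    moreover have "insert x (T' - {y}) \<subseteq> {1..n}"
      using T' x proper_idealD(4)[OF \<Delta>] by blast
    moreover have "2 * k \<le> n"
      using k by simp
    ultimately show "insert x (T' - {y}) \<in> {T \<in> \<Delta>. card T = n - k}"
      using fnum_complement_eq_imp_superset_mem[OF \<Delta> _ eq, of X] by blast
  qed (use assms(4-7) proper_idealD(6)[OF \<Delta>] finite_subset[of T "{1..n}"] in auto)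
  then show ?thesis
    by blast
qed

lemma fnum_eq_complement_iff:
  assumes \<Delta>: "proper_ideal n \<Delta>" and k: "2 * k < n"
  shows "fnum \<Delta> k = fnum \<Delta> (n - k) \<longleftrightarrow> fnum \<Delta> k = 0 \<or> fnum \<Delta> (n - k) = n choose k"
proof -
  have \<Delta>_Pow: "\<Delta> \<subseteq> Pow {1..n}"
    using \<Delta> unfolding proper_ideal_def by blast
  have choose_compl: "n choose (n - k) = n choose k"
    using k by (simp add: binomial_symmetric[symmetric])
  have "fnum \<Delta> (n - k) = n choose k"
    if eq: "fnum \<Delta> k = fnum \<Delta> (n - k)" and nonzero: "fnum \<Delta> k \<noteq> 0"
  proof -
    obtain T0 where "T0 \<in> \<Delta>" "card T0 = n - k"
      using eq nonzero unfolding fnum_def by (metis (mono_tags, lifting) card.empty empty_Collect_eq)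
    then have "fnum \<Delta> (n - k) = n choose (n - k)"
      using fnum_eq_choose_iff[OF \<Delta>_Pow] fnum_complement_eq_imp_all_mem[OF \<Delta> k eq] by blast
    then show ?thesis
      using choose_compl by simp
  qed
  moreover have "fnum \<Delta> (n - k) \<le> fnum \<Delta> k" and "fnum \<Delta> k \<le> n choose k"
    using fnum_complement_le[OF \<Delta>, of k] fnum_le_choose[OF \<Delta>_Pow, of k] k by auto
  ultimately show ?thesis
    by fastforce
qed

section \<open>Building a Bier sphere by bistellar flips\<close>

context
  fixes n :: nat and \<Delta> :: "nat set set" and S :: "nat set"
  assumes \<Delta>: "proper_ideal n \<Delta>" and S: "S \<in> \<Delta>" "S \<noteq> {}"
    and max: "\<And>A. A \<in> \<Delta> \<Longrightarrow> S \<subseteq> A \<Longrightarrow> A = S"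
begin

lemma proper_ideal_remove_maximal: "proper_ideal n (\<Delta> - {S})"
  unfolding proper_ideal_def
proof (intro conjI ballI allI impI)
  show "\<Delta> - {S} \<noteq> {}"
    using proper_idealD(2)[OF \<Delta>] S(2) by blast
  show "\<Delta> - {S} \<subseteq> Pow {1..n}" and "{1..n} \<notin> \<Delta> - {S}"
    using proper_idealD(3,4)[OF \<Delta>] by auto
  show "B \<in> \<Delta> - {S}" if "A \<in> \<Delta> - {S}" and "B \<subseteq> A" for A B
    using that proper_idealD(5)[OF \<Delta>] max by blast
qed

private lemma maximal_face_facts:
  "S \<subseteq> {1..n}" "finite S" "0 < card S" "card S < n" "L \<subset> S \<Longrightarrow> L \<in> \<Delta> - {S}"
proof -
  show "S \<subseteq> {1..n}" and "finite S"
    using S proper_idealD(4,6)[OF \<Delta>] by auto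
  moreover have "S \<noteq> {1..n}"
    using S proper_idealD(3)[OF \<Delta>] by auto
  ultimately show "0 < card S" and "card S < n"
    using S(2) psubset_card_mono[of "{1..n}" S] by auto
  show "L \<in> \<Delta> - {S}" if "L \<subset> S"
    using that S(1) proper_idealD(5)[OF \<Delta>] by blast
qed

lemma link_bier_remove_maximal:
  "link (bier n (\<Delta> - {S})) ({} <+> ({1..n} - S)) = bdry (S <+> {})"
proof (intro set_eqI)
  let ?\<Delta>' = "\<Delta> - {S}"
  note \<Delta>' = proper_ideal_remove_maximal
  fix F :: "(nat + nat) set"
  obtain L R where F: "F = L <+> R"
    by (rule Plus_cases)
  have "{1..n} - (R \<union> ({1..n} - S)) = S - R"
    using maximal_face_facts(1) by blast
  then have "F \<in> link (bier n ?\<Delta>') ({} <+> ({1..n} - S)) \<longleftrightarrow>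
      (L \<in> ?\<Delta>' \<and> R \<subseteq> {1..n} - L \<and> {1..n} - R \<notin> ?\<Delta>') \<and> R \<inter> ({1..n} - S) = {}
      \<and> (L \<in> ?\<Delta>' \<and> R \<union> ({1..n} - S) \<subseteq> {1..n} - L \<and> S - R \<notin> ?\<Delta>')"
    unfolding link_def F by (simp add: Plus_mem_bier_iff[OF \<Delta>'] Plus_Int_Plus Plus_Un_Plus)
  also have "\<dots> \<longleftrightarrow> L \<subset> S \<and> R = {}"
  proof
    assume link: "(L \<in> ?\<Delta>' \<and> R \<subseteq> {1..n} - L \<and> {1..n} - R \<notin> ?\<Delta>') \<and> R \<inter> ({1..n} - S) = {}
      \<and> (L \<in> ?\<Delta>' \<and> R \<union> ({1..n} - S) \<subseteq> {1..n} - L \<and> S - R \<notin> ?\<Delta>')"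
    then have "R \<subseteq> S" and "L \<subseteq> S" and "L \<noteq> S"
      using proper_idealD(4)[OF \<Delta>'] by blast+
    moreover have "R = {}"
      using maximal_face_facts(5)[of "S - R"] link \<open>R \<subseteq> S\<close> by blast
    ultimately show "L \<subset> S \<and> R = {}"
      by blast
  next
    assume "L \<subset> S \<and> R = {}"
    moreover have "{1..n} \<notin> ?\<Delta>'"
      using proper_idealD(3)[OF \<Delta>'] .
    ultimately show "(L \<in> ?\<Delta>' \<and> R \<subseteq> {1..n} - L \<and> {1..n} - R \<notin> ?\<Delta>') \<and> R \<inter> ({1..n} - S) = {}
      \<and> (L \<in> ?\<Delta>' \<and> R \<union> ({1..n} - S) \<subseteq> {1..n} - L \<and> S - R \<notin> ?\<Delta>')"
      using maximal_face_facts(5) by auto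
  qed
  also have "\<dots> \<longleftrightarrow> F \<in> bdry (S <+> {})"
    unfolding F bdry_def by (auto simp: Plus_subset_Plus_iff Plus_eq_Plus_iff psubset_eq)
  finally show "F \<in> link (bier n ?\<Delta>') ({} <+> ({1..n} - S)) \<longleftrightarrow> F \<in> bdry (S <+> {})" .
qed

lemma bier_eq_flip_remove_maximal:
  "bier n \<Delta> = (bier n (\<Delta> - {S}) - join (Pow ({} <+> ({1..n} - S))) (bdry (S <+> {})))
    \<union> join (bdry ({} <+> ({1..n} - S))) (Pow (S <+> {}))"
  (is "_ = (bier n ?\<Delta>' - join (Pow ?A) (bdry ?B)) \<union> join (bdry ?A) (Pow ?B)")
proof (intro set_eqI)
  note \<Delta>' = proper_ideal_remove_maximal
  fix F :: "(nat + nat) set"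
  obtain L R where F: "F = L <+> R"
    by (rule Plus_cases)
  have union: "?A \<union> ?B = S <+> ({1..n} - S)" and disj: "?A \<inter> ?B = {}"
    by (auto simp: Plus_Un_Plus Plus_Int_Plus)
  have flip_sets: "L <+> R \<in> (bier n ?\<Delta>' - join (Pow ?A) (bdry ?B)) \<union> join (bdry ?A) (Pow ?B) \<longleftrightarrow>
      (L <+> R \<in> bier n ?\<Delta>' \<and> \<not> (L \<subseteq> S \<and> R \<subseteq> {1..n} - S \<and> \<not> S \<subseteq> L))
      \<or> (L \<subseteq> S \<and> R \<subseteq> {1..n} - S \<and> \<not> {1..n} - S \<subseteq> R)"
    unfolding join_Pow_bdry[OF disj] join_bdry_Pow[OF disj] union by (simp add: Plus_subset_Plus_iff)
  show "F \<in> bier n \<Delta> \<longleftrightarrow> F \<in> (bier n ?\<Delta>' - join (Pow ?A) (bdry ?B)) \<union> join (bdry ?A) (Pow ?B)"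
  proof (cases "L \<subseteq> S \<and> R \<subseteq> {1..n} - S")
    case True
    have "L \<in> \<Delta>"
      using True S(1) proper_idealD(5)[OF \<Delta>] by blast
    moreover have "{1..n} - R \<notin> \<Delta> \<longleftrightarrow> R \<noteq> {1..n} - S"
    proof
      assume "R \<noteq> {1..n} - S"
      then have "S \<subseteq> {1..n} - R" and "{1..n} - R \<noteq> S"
        using True maximal_face_facts(1) by blast+
      then show "{1..n} - R \<notin> \<Delta>"
        using max by blast
    qed (use maximal_face_facts(1) S(1) in \<open>auto simp: double_diff\<close>)
    ultimately show ?thesis
      unfolding F flip_sets using True
      by (auto simp: Plus_mem_bier_iff[OF \<Delta>] Plus_mem_bier_iff[OF \<Delta>'])
  next
    case False
    have "{1..n} - R \<noteq> S" if "R \<subseteq> {1..n} - L" and "L \<in> \<Delta>"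
      using False that maximal_face_facts(1) proper_idealD(4)[OF \<Delta>] by blast
    then show ?thesis
      unfolding F flip_sets using False
      by (auto simp: Plus_mem_bier_iff[OF \<Delta>] Plus_mem_bier_iff[OF \<Delta>'])
  qed
qed

lemma bier_remove_maximal_flip:
  "bistellar_flip (n - 2) (card S - 1) (bier n (\<Delta> - {S})) (bier n \<Delta>)"
proof -
  let ?\<Delta>' = "\<Delta> - {S}" and ?A = "{} <+> ({1..n} - S)" and ?B = "S <+> {}"
  note \<Delta>' = proper_ideal_remove_maximal
  have "{1..n} - ({1..n} - S) = S"
    using maximal_face_facts(1) by blast
  then have "?A \<in> bier n ?\<Delta>'"
    using proper_idealD(2)[OF \<Delta>] S(2) by (auto simp: Plus_mem_bier_iff[OF \<Delta>'])
  moreover have "card ?A = n - 2 - (card S - 1) + 1" and "card ?B = card S - 1 + 1"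
    using maximal_face_facts(1-4) by (simp_all add: card_Plus card_Diff_subset)
  moreover have "?A \<inter> ?B = {}" and "?B \<notin> bier n ?\<Delta>'" and "card S - 1 \<le> n - 2"
    using maximal_face_facts(4) by (auto simp: Plus_mem_bier_iff[OF \<Delta>'] Plus_Int_Plus)
  ultimately show ?thesis
    unfolding bistellar_flip_def using maximal_face_facts(2)
      link_bier_remove_maximal bier_eq_flip_remove_maximal
    by (intro conjI exI[of _ ?A] exI[of _ ?B]) auto
qed

end

lemma bier_empty_ideal:
  assumes "proper_ideal n {{}}"
  shows "bier n {{}} = bdry ({} <+> {1..n})"
proof (intro set_eqI)
  fix F :: "(nat + nat) set"
  obtain L R where F: "F = L <+> R"
    by (rule Plus_cases)
  show "F \<in> bier n {{}} \<longleftrightarrow> F \<in> bdry ({} <+> {1..n})"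
    unfolding F bdry_def
    by (auto simp: Plus_mem_bier_iff[OF assms] Plus_subset_Plus_iff Plus_eq_Plus_iff)
qed

lemma bier_flip_reachable:
  assumes "proper_ideal n \<Delta>" and "\<forall>S\<in>\<Delta>. card S < k"
  shows "(flip_step (n - 2) k)\<^sup>*\<^sup>* (bdry ({} <+> {1..n})) (bier n \<Delta>)"
  using assms
proof (induction "card \<Delta>" arbitrary: \<Delta> rule: less_induct)
  case less
  note \<Delta> = less.prems(1)
  show ?case
  proof (cases "\<Delta> = {{}}")
    case True
    then show ?thesis
      using bier_empty_ideal \<Delta> by simp
  next
    case False
    then obtain T where "T \<in> \<Delta>" "T \<noteq> {}"
      using proper_idealD(2)[OF \<Delta>] by blast
    then obtain S where S: "S \<in> \<Delta>" "T \<subseteq> S" and max: "\<And>A. A \<in> \<Delta> \<Longrightarrow> S \<subseteq> A \<Longrightarrow> A = S"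
      using finite_has_maximal2[OF proper_idealD(1)[OF \<Delta>]] by metis
    have "S \<noteq> {}"
      using S \<open>T \<noteq> {}\<close> by blast
    have "(flip_step (n - 2) k)\<^sup>*\<^sup>* (bdry ({} <+> {1..n})) (bier n (\<Delta> - {S}))"
      using less.hyps[of "\<Delta> - {S}"] proper_ideal_remove_maximal[OF \<Delta> S(1) \<open>S \<noteq> {}\<close> max]
        less.prems(2) card_Diff1_less[OF proper_idealD(1)[OF \<Delta>] S(1)] by blast
    moreover have "card S - 1 \<le> k - 2"
      using less.prems(2) S(1) \<open>S \<noteq> {}\<close> proper_idealD(6)[OF \<Delta> S(1)] by fastforce
    then have "flip_step (n - 2) k (bier n (\<Delta> - {S})) (bier n \<Delta>)"
      unfolding flip_step_def using bier_remove_maximal_flip[OF \<Delta> S(1) \<open>S \<noteq> {}\<close> max] by blast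
    ultimately show ?thesis
      by (rule rtranclp.rtrancl_into_rtrancl)
  qed
qed

lemma fnum_eq_0_imp_card_less:
  assumes \<Delta>: "proper_ideal n \<Delta>" and "fnum \<Delta> k = 0" and "S \<in> \<Delta>"
  shows "card S < k"
proof (rule ccontr)
  assume "\<not> card S < k"
  then obtain X where "X \<subseteq> S" and "card X = k"
    by (meson not_less obtain_subset_with_card_n)
  then have "X \<in> {X \<in> \<Delta>. card X = k}"
    using proper_idealD(5)[OF \<Delta> assms(3)] by blast
  then show False
    using assms(2) proper_idealD(1)[OF \<Delta>] unfolding fnum_def by (auto simp: card_eq_0_iff)
qed

section \<open>Alexander duality\<close>

definition alexander_dual :: "nat \<Rightarrow> nat set set \<Rightarrow> nat set set" where
  "alexander_dual n \<Delta> = {D. D \<subseteq> {1..n} \<and> {1..n} - D \<notin> \<Delta>}"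

lemma proper_ideal_alexander_dual:
  assumes \<Delta>: "proper_ideal n \<Delta>"
  shows "proper_ideal n (alexander_dual n \<Delta>)"
  unfolding proper_ideal_def
proof (intro conjI ballI allI impI)
  have "{} \<in> alexander_dual n \<Delta>"
    using proper_idealD(3)[OF \<Delta>] unfolding alexander_dual_def by simp
  then show "alexander_dual n \<Delta> \<noteq> {}"
    by blast
  show "{1..n} \<notin> alexander_dual n \<Delta>"
    using proper_idealD(2)[OF \<Delta>] unfolding alexander_dual_def by simp
  show "alexander_dual n \<Delta> \<subseteq> Pow {1..n}"
    unfolding alexander_dual_def by blast
  show "B \<in> alexander_dual n \<Delta>" if "A \<in> alexander_dual n \<Delta>" and "B \<subseteq> A" for A B
  proof -
    have "{1..n} - A \<subseteq> {1..n} - B"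
      using that(2) by blast
    then have "{1..n} - B \<notin> \<Delta>"
      using that(1) proper_idealD(5)[OF \<Delta>] unfolding alexander_dual_def by blast
    then show ?thesis
      using that unfolding alexander_dual_def by blast
  qed
qed

lemma bier_alexander_dual:
  assumes \<Delta>: "proper_ideal n \<Delta>"
  shows "cx_iso (bier n (alexander_dual n \<Delta>)) (bier n \<Delta>)"
proof -
  have "inj (case_sum Inr Inl :: nat + nat \<Rightarrow> nat + nat)"
    by (rule injI) (auto split: sum.splits)
  moreover have "(\<lambda>F. case_sum Inr Inl ` F) ` bier n (alexander_dual n \<Delta>) = bier n \<Delta>"
  proof (intro set_eqI)
    fix F :: "(nat + nat) set"
    obtain L R where F: "F = L <+> R"
      by (rule Plus_cases)
    have "F = case_sum Inr Inl ` (R <+> L)"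
      unfolding F swap_image_Plus ..
    moreover have "L <+> R = case_sum Inr Inl ` G \<Longrightarrow> G = R <+> L" for G
      by (metis Plus_cases swap_image_Plus Plus_eq_Plus_iff)
    moreover have "R <+> L \<in> bier n (alexander_dual n \<Delta>) \<longleftrightarrow> L <+> R \<in> bier n \<Delta>"
      unfolding Plus_mem_bier_iff[OF \<Delta>] Plus_mem_bier_iff[OF proper_ideal_alexander_dual[OF \<Delta>]]
    proof (cases "L \<subseteq> {1..n}")
      case True
      then have "{1..n} - ({1..n} - L) = L"
        by blast
      then show "R \<in> alexander_dual n \<Delta> \<and> L \<subseteq> {1..n} - R \<and> {1..n} - L \<notin> alexander_dual n \<Delta>
          \<longleftrightarrow> L \<in> \<Delta> \<and> R \<subseteq> {1..n} - L \<and> {1..n} - R \<notin> \<Delta>"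
        unfolding alexander_dual_def by auto
    qed (use proper_idealD(4)[OF \<Delta>] in \<open>auto simp: alexander_dual_def\<close>)
    ultimately show "F \<in> (\<lambda>F. case_sum Inr Inl ` F) ` bier n (alexander_dual n \<Delta>) \<longleftrightarrow> F \<in> bier n \<Delta>"
      unfolding F by blast
  qed
  ultimately show ?thesis
    unfolding cx_iso_def by (blast intro: inj_on_subset)
qed

lemma fnum_alexander_dual_eq_0:
  assumes \<Delta>: "proper_ideal n \<Delta>" and "k \<le> n" and "fnum \<Delta> (n - k) = n choose k"
  shows "fnum (alexander_dual n \<Delta>) k = 0"
proof -
  have "\<forall>T. T \<subseteq> {1..n} \<and> card T = n - k \<longrightarrow> T \<in> \<Delta>"
    using assms fnum_eq_choose_iff[of \<Delta> n "n - k"] binomial_symmetric[OF assms(2)]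
    unfolding proper_ideal_def by auto
  then have "{D \<in> alexander_dual n \<Delta>. card D = k} = {}"
    unfolding alexander_dual_def using assms(2) by (auto simp: card_Diff_subset finite_subset)
  then show ?thesis
    unfolding fnum_def by (simp only: card.empty)
qed

lemma bier_flip_reachable_if_extreme:
  assumes \<Delta>: "proper_ideal n \<Delta>" and "k \<le> n"
    and "fnum \<Delta> k = 0 \<or> fnum \<Delta> (n - k) = n choose k"
  shows "\<exists>(V :: (nat + nat) set) \<Gamma>. finite V \<and> card V = n \<and>
    (flip_step (n - 2) k)\<^sup>*\<^sup>* (bdry V) \<Gamma> \<and> cx_iso \<Gamma> (bier n \<Delta>)"
proof -
  let ?V = "({} :: nat set) <+> {1..n}"
  have "\<exists>\<Gamma>. (flip_step (n - 2) k)\<^sup>*\<^sup>* (bdry ?V) \<Gamma> \<and> cx_iso \<Gamma> (bier n \<Delta>)"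
    using assms(3)
  proof
    assume "fnum \<Delta> k = 0"
    then have "(flip_step (n - 2) k)\<^sup>*\<^sup>* (bdry ?V) (bier n \<Delta>)"
      using bier_flip_reachable[OF \<Delta>] fnum_eq_0_imp_card_less[OF \<Delta>] by blast
    then show ?thesis
      using cx_iso_refl by blast
  next
    assume "fnum \<Delta> (n - k) = n choose k"
    then have "fnum (alexander_dual n \<Delta>) k = 0"
      using fnum_alexander_dual_eq_0[OF \<Delta> assms(2)] by simp
    then have "(flip_step (n - 2) k)\<^sup>*\<^sup>* (bdry ?V) (bier n (alexander_dual n \<Delta>))"
      using bier_flip_reachable fnum_eq_0_imp_card_less proper_ideal_alexander_dual[OF \<Delta>] by blast
    then show ?thesis
      using bier_alexander_dual[OF \<Delta>] by blast
  qed
  moreover have "finite ?V" and "card ?V = n"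
    by (simp_all add: card_Plus)
  ultimately show ?thesis
    by blast
qed

theorem corollary14:
  fixes n k :: nat and \<Delta> :: "nat set set"
  assumes "n \<ge> 5" and "proper_ideal n \<Delta>" and "2 \<le> k" and "k \<le> (n - 1) div 2"
  shows "(gnum (n - 1) (bier n \<Delta>) k = 0 \<longleftrightarrow>
            (fnum \<Delta> k = 0 \<or> fnum \<Delta> (n - k) = n choose k))
       \<and> ((fnum \<Delta> k = 0 \<or> fnum \<Delta> (n - k) = n choose k) \<longleftrightarrow>
            (\<exists>(V :: (nat + nat) set) \<Gamma>. finite V \<and> card V = n \<and>
               (flip_step (n - 2) k)\<^sup>*\<^sup>* (bdry V) \<Gamma> \<and> cx_iso \<Gamma> (bier n \<Delta>)))"
proof -
  have k: "2 * k < n" "k \<le> n - 1"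
    using assms(1,4) by auto
  have "gnum (n - 1) (bier n \<Delta>) k = 0 \<longleftrightarrow> fnum \<Delta> k = fnum \<Delta> (n - k)"
    using gnum_bier[OF assms(2)] assms(3) k by simp
  moreover have extreme: "fnum \<Delta> k = fnum \<Delta> (n - k) \<longleftrightarrow> fnum \<Delta> k = 0 \<or> fnum \<Delta> (n - k) = n choose k"
    using fnum_eq_complement_iff[OF assms(2) k(1)] .
  moreover have "(\<exists>(V :: (nat + nat) set) \<Gamma>. finite V \<and> card V = n \<and>
      (flip_step (n - 2) k)\<^sup>*\<^sup>* (bdry V) \<Gamma> \<and> cx_iso \<Gamma> (bier n \<Delta>))
    \<longleftrightarrow> (fnum \<Delta> k = 0 \<or> fnum \<Delta> (n - k) = n choose k)"
    using bier_flip_reachable_if_extreme[OF assms(2), of k] fnum_balanced_if_flip_reachable[OF assms(2,3)]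
      extreme k by fastforce
  ultimately show ?thesis
    by blast
qed

end
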